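(* Let $$P_0=1-\tfrac29z-\tfrac13v+\tfrac16zv-\tfrac49w+\tfrac13vw-\tfrac16zvw,$$ $$P_1=\tfrac29z+\tfrac13v-\tfrac16yv-\tfrac16zv+\tfrac49w-\tfrac13uw+\tfrac16yuw-\tfrac13vw+\tfrac16yvw+\tfrac16zvw,$$ $$P_2=\tfrac16yv+\tfrac13uw-\tfrac16xuw-\tfrac16yuw-\tfrac16yvw.$$ Then for each $i=0,1,2$ and all $(x,y,z,u,v,w)\in[0,1]^6$ we have $P_i(x,y,z,u,v,w)\ge0$.
   Context: These are the positivity polynomials of the three-stage third-order explicit Runge--Kutta method with $a_{21}=\frac12$, $a_{31}=0$, $a_{32}=\frac34$ and $b=(\frac29,\frac13,\frac49)$: applying it to $u_k'=q_k(u,t)(u_{k-1}-u_k)/\Delta x$ gives $u^{n+1}_k=P_0u^n_k+P_1u^n_{k-1}+P_2u^n_{k-2}+P_3u^n_{k-3}$ with $P_3=\frac16xuw$, where $x=\xi^1_{k-2}$, $y=\xi^1_{k-1}$, $z=\xi^1_k$, $u=\xi^2_{k-1}$, $v=\xi^2_k$, $w=\xi^3_k$ and $\xi^j_\ell=\frac{\Delta t}{\Delta x}q_\ell(y^j,t_n+c_j\Delta t)$ for the stage values $y^j$. *)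

theory Defs
  imports Complex_Main
begin

definition P0 :: "real \<Rightarrow> real \<Rightarrow> real \<Rightarrow> real \<Rightarrow> real \<Rightarrow> real \<Rightarrow> real" where
  "P0 x y z u v w = 1 - 2/9*z - 1/3*v + 1/6*z*v - 4/9*w + 1/3*v*w - 1/6*z*v*w"

definition P1 :: "real \<Rightarrow> real \<Rightarrow> real \<Rightarrow> real \<Rightarrow> real \<Rightarrow> real \<Rightarrow> real" where
  "P1 x y z u v w = 2/9*z + 1/3*v - 1/6*y*v - 1/6*z*v + 4/9*w - 1/3*u*w + 1/6*y*u*w
     - 1/3*v*w + 1/6*y*v*w + 1/6*z*v*w"

definition P2 :: "real \<Rightarrow> real \<Rightarrow> real \<Rightarrow> real \<Rightarrow> real \<Rightarrow> real \<Rightarrow> real" where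
  "P2 x y z u v w = 1/6*y*v + 1/3*u*w - 1/6*x*u*w - 1/6*y*u*w - 1/6*y*v*w"

end

theory Submission
  imports Defs
begin

text \<open>Each \<open>P\<^sub>i\<close> is affine in \<open>w\<close>, so it suffices to check the two endpoint coefficients
  of \<open>P\<^sub>i = (1 - w) A\<^sub>i + w B\<^sub>i\<close>; these are sums of products of factors that are nonnegative on the
  unit cube.\<close>

lemma P0_affine_in_w:
  "P0 x y z u v w = (1 - w) * (1 - 2/9*z - 1/3*v + 1/6*z*v) + w * (5/9 - 2/9*z)"
  unfolding P0_def by (simp add: field_simps)

lemma P1_affine_in_w:
  "P1 x y z u v w =
     (1 - w) * (z * (2/9 - v/6) + v * (1/3 - y/6)) + w * (2/9*z + 4/9 - u/3 + y*u/6)"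
  unfolding P1_def by (simp add: field_simps)

lemma P2_affine_in_w:
  "P2 x y z u v w = y * v * (1 - w) / 6 + u * w * (2 - x - y) / 6"
  unfolding P2_def by (simp add: field_simps)

lemma P0_nonneg:
  fixes z v w :: real
  assumes "z \<in> {0..1}" "v \<in> {0..1}" "w \<in> {0..1}"
  shows "P0 x y z u v w \<ge> 0"
proof -
  have "0 \<le> 1 - 2/9*z - 1/3*v + 1/6*z*v"
    using assms mult_nonneg_nonneg[of z v] by auto
  with assms show ?thesis
    unfolding P0_affine_in_w by (intro add_nonneg_nonneg mult_nonneg_nonneg; simp)
qed

lemma P1_nonneg:
  fixes y z u v w :: real
  assumes "y \<in> {0..1}" "z \<in> {0..1}" "u \<in> {0..1}" "v \<in> {0..1}" "w \<in> {0..1}"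
  shows "P1 x y z u v w \<ge> 0"
proof -
  have "0 \<le> z * (2/9 - v/6) + v * (1/3 - y/6)"
    using assms by (intro add_nonneg_nonneg mult_nonneg_nonneg) auto
  moreover have "0 \<le> 2/9*z + 4/9 - u/3 + y*u/6"
    using assms mult_nonneg_nonneg[of y u] by auto
  ultimately show ?thesis
    using assms unfolding P1_affine_in_w by (intro add_nonneg_nonneg mult_nonneg_nonneg; simp)
qed

lemma P2_nonneg:
  fixes x y u v w :: real
  assumes "x \<in> {0..1}" "y \<in> {0..1}" "u \<in> {0..1}" "v \<in> {0..1}" "w \<in> {0..1}"
  shows "P2 x y z u v w \<ge> 0"
  unfolding P2_affine_in_w using assms
  by (intro add_nonneg_nonneg divide_nonneg_nonneg mult_nonneg_nonneg) auto

theorem proposition3: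
  fixes x y z u v w :: real
  assumes "x \<in> {0..1}" "y \<in> {0..1}" "z \<in> {0..1}"
      and "u \<in> {0..1}" "v \<in> {0..1}" "w \<in> {0..1}"
  shows "P0 x y z u v w \<ge> 0 \<and> P1 x y z u v w \<ge> 0 \<and> P2 x y z u v w \<ge> 0"
  using assms by (simp add: P0_nonneg P1_nonneg P2_nonneg)

end
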